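(* Let $\mathcal X,\mathcal C,d,G_{\mathcal C}$ be as in the context, let $\sigma$ be any cycle decomposition of $G_{\mathcal C}$, $\epsilon\in[0,1]$, $N\ge1$. With $\mathcal B_{\mathcal C}(\sigma)$ of size $M=2^{|\sigma|}$, $\mathbb P_0=p_0^N$ and $\mathbb P_1=\frac1M\sum_{b\in\mathcal B_{\mathcal C}(\sigma)}q_{b,\epsilon}^N$, $$\chi^2(\mathbb P_1,\mathbb P_0)+1\le\exp\Big(\frac{N^2\epsilon^4}{2d}\alpha(\sigma)\Big).$$
   Context: $\mathcal X$ is a finite set of $n$ items, $\mathcal C$ a collection of $m\ge n$ distinct subsets of $\mathcal X$ of size at least 2, $d=\sum_{C\in\mathcal C}|C|$; coordinates are indexed by pairs $(x,C)$, $x\in C\in\mathcal C$. $G_{\mathcal C}$ is the bipartite graph with item-nodes $\mathcal X$, set-nodes $\mathcal C$, and an edge $(x,C)$ iff $x\in C$. Standing assumptions: $G_{\mathcal C}$ connected, every $|C|$ even, every item in an even number of sets. A cycle decomposition $\sigma$ partitions the edges of $G_{\mathcal C}$ into edge-disjoint simple cycles $\sigma_1,\dots,\sigma_{|\sigma|}$; $\alpha(\sigma)=\frac1d\sum_i|\sigma_i|^2$ with $|\sigma_i|$ the number of edges of $\sigma_i$. $\mathcal B_{\mathcal C}(\sigma)$ is the set of $2^{|\sigma|}$ vectors $b\in\{-1,1\}^d$ obtained by choosing independently one of the two cyclic orientations of each $\sigma_i$ and setting $b_{(x,C)}=1$ if edge $(x,C)$ is oriented from $x$ to $C$, $-1$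 otherwise. $p_0$ is uniform on the $d$ pairs; $q_{b,\epsilon}((x,C))=\frac1d+\frac{\epsilon b_{(x,C)}}d$; $\mu^N$ denotes the law of $N$ i.i.d. samples; $\chi^2(P,Q)=\mathbb E_Q[(dP/dQ)^2]-1$. *)

theory Defs
  imports Complex_Main "HOL-Library.FuncSet"
begin

definition edges :: "'a set set \<Rightarrow> ('a \<times> 'a set) set" where
  "edges CC = {(x, S). S \<in> CC \<and> x \<in> S}"

definition dim :: "'a set set \<Rightarrow> nat" where
  "dim CC = card (edges CC)"

definition gadj :: "'a set set \<Rightarrow> ('a + 'a set) \<Rightarrow> ('a + 'a set) \<Rightarrow> bool" where
  "gadj CC u v = (\<exists>x S. (x, S) \<in> edges CC \<and>
      ((u = Inl x \<and> v = Inr S) \<or> (u = Inr S \<and> v = Inl x)))"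

definition gconnected :: "'a set \<Rightarrow> 'a set set \<Rightarrow> bool" where
  "gconnected X CC = (\<forall>u\<in>Inl ` X \<union> Inr ` CC. \<forall>v\<in>Inl ` X \<union> Inr ` CC. (gadj CC)\<^sup>*\<^sup>* u v)"

text \<open>A simple cycle of G_C, given by items xs = [x_0,...,x_{k-1}] and sets cs = [C_0,...,C_{k-1}]
  (k >= 2, all distinct), traversed x_0 -> C_0 -> x_1 -> C_1 -> ... -> C_{k-1} -> x_0.\<close>
type_synonym 'a cycle = "'a list \<times> 'a set list"

definition is_cycle :: "'a set set \<Rightarrow> 'a cycle \<Rightarrow> bool" where
  "is_cycle CC c = (let xs = fst c; cs = snd c; k = length xs in
     length cs = k \<and> k \<ge> 2 \<and> distinct xs \<and> distinct cs \<and> set cs \<subseteq> CC \<and>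
     (\<forall>i<k. xs ! i \<in> cs ! i \<and> xs ! ((i + 1) mod k) \<in> cs ! i))"

definition cyc_edges :: "'a cycle \<Rightarrow> ('a \<times> 'a set) set" where
  "cyc_edges c = (let xs = fst c; cs = snd c; k = length xs in
     {(xs ! i, cs ! i) | i. i < k} \<union> {(xs ! ((i + 1) mod k), cs ! i) | i. i < k})"

definition cyc_len :: "'a cycle \<Rightarrow> nat" where
  "cyc_len c = 2 * length (fst c)"

text \<open>Sign of an edge under the forward orientation: +1 if it is traversed from the item
  to the set, -1 otherwise.\<close>
definition fwd_sign :: "'a cycle \<Rightarrow> ('a \<times> 'a set) \<Rightarrow> real" where
  "fwd_sign c e = (if \<exists>i<length (fst c). e = (fst c ! i, snd c ! i) then 1 else -1)"

definition cycle_decomp :: "'a set set \<Rightarrow> 'a cycle list \<Rightarrow> bool" where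
  "cycle_decomp CC \<sigma> = ((\<forall>i<length \<sigma>. is_cycle CC (\<sigma> ! i)) \<and>
     (\<forall>i<length \<sigma>. \<forall>j<length \<sigma>. i \<noteq> j \<longrightarrow> cyc_edges (\<sigma> ! i) \<inter> cyc_edges (\<sigma> ! j) = {}) \<and>
     (\<Union>i<length \<sigma>. cyc_edges (\<sigma> ! i)) = edges CC)"

definition alpha :: "'a set set \<Rightarrow> 'a cycle list \<Rightarrow> real" where
  "alpha CC \<sigma> = (1 / real (dim CC)) * (\<Sum>i<length \<sigma>. real (cyc_len (\<sigma> ! i)) ^ 2)"

text \<open>The set B_C(sigma): choose an orientation (t i = 1 forward, -1 backward) per cycle.
  Vectors are functions on pairs, taking value 0 outside the coordinate set.\<close>
definition Bset :: "'a cycle list \<Rightarrow> (('a \<times> 'a set) \<Rightarrow> real) set" where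
  "Bset \<sigma> = {b. \<exists>t::nat \<Rightarrow> real. (\<forall>i<length \<sigma>. t i \<in> {-1, 1}) \<and>
      b = (\<lambda>e. \<Sum>i<length \<sigma>. if e \<in> cyc_edges (\<sigma> ! i) then t i * fwd_sign (\<sigma> ! i) e else 0)}"

definition p0 :: "'a set set \<Rightarrow> ('a \<times> 'a set) \<Rightarrow> real" where
  "p0 CC e = 1 / real (dim CC)"

definition qbe :: "'a set set \<Rightarrow> (('a \<times> 'a set) \<Rightarrow> real) \<Rightarrow> real \<Rightarrow> ('a \<times> 'a set) \<Rightarrow> real" where
  "qbe CC b \<epsilon> e = 1 / real (dim CC) + \<epsilon> * b e / real (dim CC)"

text \<open>Law of N i.i.d. samples (as a probability mass function on sample sequences).\<close>
definition prodlaw :: "('e \<Rightarrow> real) \<Rightarrow> nat \<Rightarrow> (nat \<Rightarrow> 'e) \<Rightarrow> real" where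
  "prodlaw p N z = (\<Prod>i<N. p (z i))"

definition samples :: "'a set set \<Rightarrow> nat \<Rightarrow> (nat \<Rightarrow> ('a \<times> 'a set)) set" where
  "samples CC N = PiE {..<N} (\<lambda>_. edges CC)"

definition P0 :: "'a set set \<Rightarrow> nat \<Rightarrow> (nat \<Rightarrow> ('a \<times> 'a set)) \<Rightarrow> real" where
  "P0 CC N = prodlaw (p0 CC) N"

definition P1 :: "'a set set \<Rightarrow> 'a cycle list \<Rightarrow> real \<Rightarrow> nat \<Rightarrow> (nat \<Rightarrow> ('a \<times> 'a set)) \<Rightarrow> real" where
  "P1 CC \<sigma> \<epsilon> N z = (1 / real (card (Bset \<sigma>))) * (\<Sum>b\<in>Bset \<sigma>. prodlaw (qbe CC b \<epsilon>) N z)"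

definition chi2 :: "('z \<Rightarrow> real) \<Rightarrow> ('z \<Rightarrow> real) \<Rightarrow> 'z set \<Rightarrow> real" where
  "chi2 P Q \<Omega> = (\<Sum>z\<in>\<Omega>. Q z * (P z / Q z) ^ 2) - 1"

end

theory Submission
  imports Defs "HOL-Probability.Hoeffding"
begin

text \<open>By the second-moment (Ingster) identity, \<open>\<chi>\<^sup>2 + 1\<close> is the average over pairs \<open>b, b'\<close> of
  \<open>(\<Sum>\<^sub>e q\<^sub>b q\<^sub>b\<^sub>' / p\<^sub>0)\<^sup>N\<close>. Because every \<open>b\<close> sums to zero, this base equals
  \<open>1 + \<epsilon>\<^sup>2 \<langle>b, b'\<rangle> / d \<le> exp (\<epsilon>\<^sup>2 \<langle>b, b'\<rangle> / d)\<close>. On the cycle \<open>\<sigma>\<^sub>i\<close> the product \<open>b\<^sub>e b'\<^sub>e\<close> is the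
  constant \<open>t\<^sub>i t'\<^sub>i\<close> of the two orientation signs, so \<open>\<langle>b, b'\<rangle> = \<Sum>\<^sub>i t\<^sub>i t'\<^sub>i |\<sigma>\<^sub>i|\<close>. Averaging the
  exponential over independent signs factorises into \<open>\<Prod>\<^sub>i cosh (N \<epsilon>\<^sup>2 |\<sigma>\<^sub>i| / d)\<close>, and
  \<open>cosh y \<le> exp (y\<^sup>2 / 2)\<close>.\<close>

lemma cosh_le_exp_half_square: "cosh (y :: real) \<le> exp (y\<^sup>2 / 2)"
proof -
  \<comment> \<open>Hoeffding's lemma for a fair coin with range \<open>2 \<bar>y\<bar>\<close>.\<close>
  have "- (2 * \<bar>y\<bar>) * (1 / 2) + ln (1 + 1 / 2 * (exp (2 * \<bar>y\<bar>) - 1)) \<le> (2 * \<bar>y\<bar>)\<^sup>2 / 8"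
    by (rule Hoeffdings_lemma_aux) auto
  moreover have "1 + 1 / 2 * (exp (2 * \<bar>y\<bar>) - 1) = exp \<bar>y\<bar> * cosh \<bar>y\<bar>"
    by (simp add: cosh_def field_simps exp_minus flip: exp_add)
  ultimately have "ln (cosh y) \<le> y\<^sup>2 / 2"
    by (simp add: ln_mult power_mult_distrib)
  then show ?thesis
    by (metis cosh_real_pos exp_le_cancel_iff exp_ln)
qed

lemma one_plus_power_le_exp:
  fixes x :: real
  assumes "-1 \<le> x"
  shows "(1 + x) ^ N \<le> exp (real N * x)"
proof -
  have "(1 + x) ^ N \<le> exp x ^ N"
    using assms by (intro power_mono) auto
  then show ?thesis
    by (simp add: exp_of_nat_mult)
qed

lemma chi2_mixture_prodlaw:
  fixes p :: "'e \<Rightarrow> real" and q :: "'b \<Rightarrow> 'e \<Rightarrow> real"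
  assumes "finite E" "finite B" "\<And>e. e \<in> E \<Longrightarrow> p e \<noteq> 0"
  shows "chi2 (\<lambda>z. 1 / real (card B) * (\<Sum>b\<in>B. prodlaw (q b) N z)) (prodlaw p N)
           (PiE {..<N} (\<lambda>_. E)) + 1
       = (1 / real (card B))\<^sup>2 * (\<Sum>b\<in>B. \<Sum>b'\<in>B. (\<Sum>e\<in>E. q b e * q b' e / p e) ^ N)"
proof -
  define M where "M = 1 / real (card B)"
  define \<Omega> where "\<Omega> = PiE {..<N} (\<lambda>_. E)"
  define r where "r b b' e = q b e * q b' e / p e" for b b' e
  have pointwise: "prodlaw p N z * (M * (\<Sum>b\<in>B. prodlaw (q b) N z) / prodlaw p N z)\<^sup>2
      = M\<^sup>2 * (\<Sum>b\<in>B. \<Sum>b'\<in>B. \<Prod>j<N. r b b' (z j))" if "z \<in> \<Omega>" for z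
  proof -
    have "prodlaw p N z \<noteq> 0"
      using that assms(3) unfolding prodlaw_def \<Omega>_def by (auto simp: PiE_mem)
    then have "prodlaw p N z * (M * (\<Sum>b\<in>B. prodlaw (q b) N z) / prodlaw p N z)\<^sup>2
        = M\<^sup>2 * ((\<Sum>b\<in>B. prodlaw (q b) N z) * (\<Sum>b'\<in>B. prodlaw (q b') N z) / prodlaw p N z)"
      by (simp add: power2_eq_square field_simps)
    also have "\<dots> = M\<^sup>2 * (\<Sum>b\<in>B. \<Sum>b'\<in>B. prodlaw (q b) N z * prodlaw (q b') N z / prodlaw p N z)"
      by (simp add: sum_product sum_divide_distrib)
    also have "\<dots> = M\<^sup>2 * (\<Sum>b\<in>B. \<Sum>b'\<in>B. \<Prod>j<N. r b b' (z j))"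
      by (simp add: prodlaw_def r_def prod.distrib prod_dividef)
    finally show ?thesis .
  qed
  have "chi2 (\<lambda>z. M * (\<Sum>b\<in>B. prodlaw (q b) N z)) (prodlaw p N) \<Omega> + 1
      = (\<Sum>z\<in>\<Omega>. M\<^sup>2 * (\<Sum>b\<in>B. \<Sum>b'\<in>B. \<Prod>j<N. r b b' (z j)))"
    unfolding chi2_def using pointwise by simp
  also have "\<dots> = M\<^sup>2 * (\<Sum>b\<in>B. \<Sum>b'\<in>B. \<Sum>z\<in>\<Omega>. \<Prod>j<N. r b b' (z j))"
    by (simp add: sum_distrib_left sum.swap[of _ \<Omega>] sum.swap[of _ \<Omega> B])
  also have "\<dots> = M\<^sup>2 * (\<Sum>b\<in>B. \<Sum>b'\<in>B. (\<Sum>e\<in>E. r b b' e) ^ N)"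
  proof -
    have "(\<Sum>z\<in>\<Omega>. \<Prod>j<N. r b b' (z j)) = (\<Sum>e\<in>E. r b b' e) ^ N" for b b'
      using prod_sum_PiE[of "{..<N}" "\<lambda>_. E" "\<lambda>_. r b b'"] assms(1) by (simp add: \<Omega>_def)
    then show ?thesis
      by simp
  qed
  finally show ?thesis
    unfolding M_def \<Omega>_def r_def .
qed

definition cyc_fwd_edges :: "'a cycle \<Rightarrow> ('a \<times> 'a set) set" where
  "cyc_fwd_edges c = (\<lambda>i. (fst c ! i, snd c ! i)) ` {..<length (fst c)}"

definition cyc_bwd_edges :: "'a cycle \<Rightarrow> ('a \<times> 'a set) set" where
  "cyc_bwd_edges c = (\<lambda>i. (fst c ! ((i + 1) mod length (fst c)), snd c ! i)) ` {..<length (fst c)}"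

lemma cyc_edges_eq_fwd_un_bwd: "cyc_edges c = cyc_fwd_edges c \<union> cyc_bwd_edges c"
  unfolding cyc_edges_def cyc_fwd_edges_def cyc_bwd_edges_def Let_def by auto

lemma finite_cyc_edges [simp]: "finite (cyc_edges c)"
  by (simp add: cyc_edges_eq_fwd_un_bwd cyc_fwd_edges_def cyc_bwd_edges_def)

lemma fwd_sign_eq: "fwd_sign c e = (if e \<in> cyc_fwd_edges c then 1 else -1)"
  unfolding fwd_sign_def cyc_fwd_edges_def by auto

lemma fwd_sign_square [simp]: "fwd_sign c e * fwd_sign c e = 1"
  by (simp add: fwd_sign_eq)

lemma is_cycle_fwd_edge:
  assumes "is_cycle CC c"
  shows "(fst c ! 0, snd c ! 0) \<in> cyc_fwd_edges c"
  using assms unfolding is_cycle_def cyc_fwd_edges_def Let_def by auto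

lemma is_cycle_card_fwd_bwd:
  assumes "is_cycle CC c"
  shows "card (cyc_fwd_edges c) = length (fst c)" "card (cyc_bwd_edges c) = length (fst c)"
proof -
  have "distinct (snd c)" "length (snd c) = length (fst c)"
    using assms unfolding is_cycle_def Let_def by auto
  then have "inj_on (\<lambda>i. (fst c ! i, snd c ! i)) {..<length (fst c)}"
    "inj_on (\<lambda>i. (fst c ! ((i + 1) mod length (fst c)), snd c ! i)) {..<length (fst c)}"
    by (auto simp: inj_on_def nth_eq_iff_index_eq)
  then show "card (cyc_fwd_edges c) = length (fst c)" "card (cyc_bwd_edges c) = length (fst c)"
    by (simp_all add: cyc_fwd_edges_def cyc_bwd_edges_def card_image)
qed

text \<open>A forward and a backward edge sharing the set \<open>C\<^sub>i\<close> have the items \<open>x\<^sub>i \<noteq> x\<^sub>i\<^sub>+\<^sub>1\<close>, since \<open>k \<ge> 2\<close>.\<close>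
lemma is_cycle_fwd_bwd_disjoint:
  assumes "is_cycle CC c"
  shows "cyc_fwd_edges c \<inter> cyc_bwd_edges c = {}"
proof -
  obtain xs cs where c: "c = (xs, cs)" by (cases c)
  define k where "k = length xs"
  have cs: "length cs = k" "distinct cs" and xs: "k \<ge> 2" "distinct xs"
    using assms unfolding is_cycle_def c k_def Let_def by auto
  have "xs ! i \<noteq> xs ! ((i + 1) mod k)" if "i < k" for i
  proof -
    have "(i + 1) mod k \<noteq> i"
      using that xs(1) by (cases "i + 1 = k") auto
    moreover have "(i + 1) mod k < k"
      using xs(1) by simp
    ultimately show ?thesis
      using that xs(2) nth_eq_iff_index_eq unfolding k_def by metis
  qed
  then show ?thesis
    using cs unfolding cyc_fwd_edges_def cyc_bwd_edges_def c k_def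
    by (auto simp: nth_eq_iff_index_eq)
qed

lemma is_cycle_card_cyc_edges:
  assumes "is_cycle CC c"
  shows "card (cyc_edges c) = cyc_len c"
  using is_cycle_card_fwd_bwd[OF assms] is_cycle_fwd_bwd_disjoint[OF assms]
  by (simp add: cyc_edges_eq_fwd_un_bwd card_Un_disjoint cyc_fwd_edges_def cyc_bwd_edges_def
      cyc_len_def)

lemma is_cycle_sum_fwd_sign:
  assumes "is_cycle CC c"
  shows "(\<Sum>e\<in>cyc_edges c. fwd_sign c e) = 0"
proof -
  have "(\<Sum>e\<in>cyc_edges c. fwd_sign c e)
      = (\<Sum>e\<in>cyc_fwd_edges c. fwd_sign c e) + (\<Sum>e\<in>cyc_bwd_edges c. fwd_sign c e)"
    using is_cycle_fwd_bwd_disjoint[OF assms]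
    by (simp add: cyc_edges_eq_fwd_un_bwd sum.union_disjoint cyc_fwd_edges_def cyc_bwd_edges_def)
  also have "\<dots> = (\<Sum>e\<in>cyc_fwd_edges c. 1) + (\<Sum>e\<in>cyc_bwd_edges c. -1)"
    using is_cycle_fwd_bwd_disjoint[OF assms]
    by (intro arg_cong2[where f = "(+)"] sum.cong) (auto simp: fwd_sign_eq)
  also have "\<dots> = 0"
    using is_cycle_card_fwd_bwd[OF assms] by simp
  finally show ?thesis .
qed

lemma cycle_decompD:
  assumes "cycle_decomp CC \<sigma>"
  shows "\<And>i. i < length \<sigma> \<Longrightarrow> is_cycle CC (\<sigma> ! i)"
    and "\<And>i j. i < length \<sigma> \<Longrightarrow> j < length \<sigma> \<Longrightarrow> i \<noteq> j \<Longrightarrow>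
           cyc_edges (\<sigma> ! i) \<inter> cyc_edges (\<sigma> ! j) = {}"
    and "edges CC = (\<Union>i<length \<sigma>. cyc_edges (\<sigma> ! i))"
  using assms unfolding cycle_decomp_def by auto

lemma cycle_decomp_finite_edges:
  assumes "cycle_decomp CC \<sigma>"
  shows "finite (edges CC)"
  by (simp add: cycle_decompD(3)[OF assms])

lemma cycle_decomp_sum_edges:
  assumes "cycle_decomp CC \<sigma>"
  shows "(\<Sum>e\<in>edges CC. g e) = (\<Sum>i<length \<sigma>. \<Sum>e\<in>cyc_edges (\<sigma> ! i). g e)"
  unfolding cycle_decompD(3)[OF assms]
  by (rule sum.UNION_disjoint) (auto dest: cycle_decompD(2)[OF assms])

definition signs :: "nat \<Rightarrow> (nat \<Rightarrow> real) set" where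
  "signs n = PiE {..<n} (\<lambda>_. {-1, 1})"

lemma card_signs: "card (signs n) = 2 ^ n"
  by (simp add: signs_def card_PiE numeral_2_eq_2)

lemma sum_signs_exp_correlation:
  assumes "t \<in> signs n"
  shows "(\<Sum>t'\<in>signs n. exp (\<Sum>i<n. t i * t' i * w i)) = 2 ^ n * (\<Prod>i<n. cosh (w i))"
proof -
  have "(\<Sum>t'\<in>signs n. exp (\<Sum>i<n. t i * t' i * w i))
      = (\<Sum>t'\<in>signs n. \<Prod>i<n. exp (t i * t' i * w i))"
    by (simp add: exp_sum)
  also have "\<dots> = (\<Prod>i<n. \<Sum>s\<in>{-1, 1}. exp (t i * s * w i))"
    unfolding signs_def by (rule prod_sum_PiE[symmetric]) auto
  also have "\<dots> = (\<Prod>i<n. 2 * cosh (w i))"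
  proof (rule prod.cong[OF refl])
    fix i assume "i \<in> {..<n}"
    then have "t i \<in> {-1, 1}"
      using assms unfolding signs_def by auto
    then show "(\<Sum>s\<in>{-1, 1}. exp (t i * s * w i)) = 2 * cosh (w i)"
      by (auto simp: cosh_def)
  qed
  also have "\<dots> = 2 ^ n * (\<Prod>i<n. cosh (w i))"
    by (simp add: prod.distrib)
  finally show ?thesis .
qed

lemma mean_exp_signs_correlation:
  "(1 / 2 ^ n)\<^sup>2 * (\<Sum>t\<in>signs n. \<Sum>t'\<in>signs n. exp (\<Sum>i<n. t i * t' i * w i))
     = (\<Prod>i<n. cosh (w i))"
  by (simp add: sum.cong[OF refl sum_signs_exp_correlation] card_signs power2_eq_square)

definition orient :: "'a cycle list \<Rightarrow> (nat \<Rightarrow> real) \<Rightarrow> ('a \<times> 'a set) \<Rightarrow> real" where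
  "orient \<sigma> t e = (\<Sum>i<length \<sigma>. if e \<in> cyc_edges (\<sigma> ! i) then t i * fwd_sign (\<sigma> ! i) e else 0)"

lemma Bset_eq_image_orient: "Bset \<sigma> = orient \<sigma> ` signs (length \<sigma>)"
proof
  show "Bset \<sigma> \<subseteq> orient \<sigma> ` signs (length \<sigma>)"
  proof
    fix b assume "b \<in> Bset \<sigma>"
    then obtain t where t: "\<forall>i<length \<sigma>. t i \<in> {-1, 1}" and b: "b = orient \<sigma> t"
      unfolding Bset_def orient_def by blast
    have "orient \<sigma> t = orient \<sigma> (restrict t {..<length \<sigma>})"
      unfolding orient_def by (intro ext sum.cong) auto
    moreover have "restrict t {..<length \<sigma>} \<in> signs (length \<sigma>)"
      using t unfolding signs_def by auto
    ultimately show "b \<in> orient \<sigma> ` signs (length \<sigma>)"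
      using b by blast
  qed
  show "orient \<sigma> ` signs (length \<sigma>) \<subseteq> Bset \<sigma>"
  proof
    fix b assume "b \<in> orient \<sigma> ` signs (length \<sigma>)"
    then obtain t where "t \<in> signs (length \<sigma>)" "b = orient \<sigma> t"
      by blast
    then show "b \<in> Bset \<sigma>"
      unfolding Bset_def signs_def by (intro CollectI exI[of _ t]) (auto simp: orient_def[abs_def])
  qed
qed

lemma orient_on_cycle:
  assumes "cycle_decomp CC \<sigma>" "i < length \<sigma>" "e \<in> cyc_edges (\<sigma> ! i)"
  shows "orient \<sigma> t e = t i * fwd_sign (\<sigma> ! i) e"
proof -
  have "orient \<sigma> t e = (\<Sum>j\<in>{i}. if e \<in> cyc_edges (\<sigma> ! j) then t j * fwd_sign (\<sigma> ! j) e else 0)"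
    unfolding orient_def using assms
    by (intro sum.mono_neutral_right) (auto dest: cycle_decompD(2)[OF assms(1)])
  then show ?thesis
    using assms(3) by simp
qed

lemma inj_on_orient:
  assumes "cycle_decomp CC \<sigma>"
  shows "inj_on (orient \<sigma>) (signs (length \<sigma>))"
proof
  fix t t' assume t: "t \<in> signs (length \<sigma>)" and t': "t' \<in> signs (length \<sigma>)"
    and eq: "orient \<sigma> t = orient \<sigma> t'"
  have "t i = t' i" if i: "i < length \<sigma>" for i
  proof -
    define e where "e = (fst (\<sigma> ! i) ! 0, snd (\<sigma> ! i) ! 0)"
    have fwd: "e \<in> cyc_fwd_edges (\<sigma> ! i)"
      unfolding e_def by (rule is_cycle_fwd_edge[OF cycle_decompD(1)[OF assms i]])
    then have "e \<in> cyc_edges (\<sigma> ! i)"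
      by (simp add: cyc_edges_eq_fwd_un_bwd)
    then show ?thesis
      using eq fwd orient_on_cycle[OF assms i] by (metis fwd_sign_eq mult.right_neutral)
  qed
  then show "t = t'"
    using t t' unfolding signs_def by (auto intro: PiE_ext)
qed

lemma card_Bset:
  assumes "cycle_decomp CC \<sigma>"
  shows "card (Bset \<sigma>) = 2 ^ length \<sigma>"
  by (simp add: Bset_eq_image_orient card_image[OF inj_on_orient[OF assms]] card_signs)

lemma sum_orient:
  assumes "cycle_decomp CC \<sigma>"
  shows "(\<Sum>e\<in>edges CC. orient \<sigma> t e) = 0"
proof -
  have "(\<Sum>e\<in>edges CC. orient \<sigma> t e)
      = (\<Sum>i<length \<sigma>. t i * (\<Sum>e\<in>cyc_edges (\<sigma> ! i). fwd_sign (\<sigma> ! i) e))"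
    by (simp add: cycle_decomp_sum_edges[OF assms] orient_on_cycle[OF assms] sum_distrib_left)
  also have "\<dots> = 0"
    by (simp add: is_cycle_sum_fwd_sign[OF cycle_decompD(1)[OF assms]])
  finally show ?thesis .
qed

lemma inner_orient:
  assumes "cycle_decomp CC \<sigma>"
  shows "(\<Sum>e\<in>edges CC. orient \<sigma> t e * orient \<sigma> t' e)
       = (\<Sum>i<length \<sigma>. t i * t' i * real (cyc_len (\<sigma> ! i)))"
proof -
  have "orient \<sigma> t e * orient \<sigma> t' e = t i * t' i"
    if "i < length \<sigma>" "e \<in> cyc_edges (\<sigma> ! i)" for i e
    using fwd_sign_square[of "\<sigma> ! i" e] by (simp add: orient_on_cycle[OF assms that])
  then show ?thesis
    by (simp add: cycle_decomp_sum_edges[OF assms] mult.commute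
        is_cycle_card_cyc_edges[OF cycle_decompD(1)[OF assms]])
qed

lemma inner_orient_ge:
  assumes "cycle_decomp CC \<sigma>" "t \<in> signs (length \<sigma>)" "t' \<in> signs (length \<sigma>)"
  shows "- real (dim CC) \<le> (\<Sum>e\<in>edges CC. orient \<sigma> t e * orient \<sigma> t' e)"
proof -
  have "-1 \<le> orient \<sigma> t e * orient \<sigma> t' e" if e: "e \<in> edges CC" for e
  proof -
    obtain i where i: "i < length \<sigma>" "e \<in> cyc_edges (\<sigma> ! i)"
      using e cycle_decompD(3)[OF assms(1)] by auto
    have "t i \<in> {-1, 1}" "t' i \<in> {-1, 1}"
      using assms(2,3) i(1) unfolding signs_def by auto
    moreover have "fwd_sign (\<sigma> ! i) e \<in> {-1, 1}"
      by (simp add: fwd_sign_eq)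
    ultimately show ?thesis
      by (auto simp: orient_on_cycle[OF assms(1) i])
  qed
  then have "(\<Sum>e\<in>edges CC. -1) \<le> (\<Sum>e\<in>edges CC. orient \<sigma> t e * orient \<sigma> t' e)"
    by (rule sum_mono)
  then show ?thesis
    by (simp add: dim_def)
qed

lemma sum_qbe_qbe_div_p0:
  assumes "dim CC > 0" "(\<Sum>e\<in>edges CC. b e) = 0" "(\<Sum>e\<in>edges CC. b' e) = 0"
  shows "(\<Sum>e\<in>edges CC. qbe CC b \<epsilon> e * qbe CC b' \<epsilon> e / p0 CC e)
       = 1 + \<epsilon>\<^sup>2 / real (dim CC) * (\<Sum>e\<in>edges CC. b e * b' e)"
proof -
  have "qbe CC b \<epsilon> e * qbe CC b' \<epsilon> e / p0 CC e
      = (1 + \<epsilon> * b e + \<epsilon> * b' e + \<epsilon>\<^sup>2 * (b e * b' e)) / real (dim CC)" for e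
    using assms(1) by (simp add: qbe_def p0_def field_simps power2_eq_square)
  then have "(\<Sum>e\<in>edges CC. qbe CC b \<epsilon> e * qbe CC b' \<epsilon> e / p0 CC e)
      = (\<Sum>e\<in>edges CC. 1 + \<epsilon> * b e + \<epsilon> * b' e + \<epsilon>\<^sup>2 * (b e * b' e)) / real (dim CC)"
    by (simp add: sum_divide_distrib)
  also have "\<dots> = (real (dim CC) + \<epsilon>\<^sup>2 * (\<Sum>e\<in>edges CC. b e * b' e)) / real (dim CC)"
    using assms(2,3) by (simp add: sum.distrib sum_distrib_left[symmetric] dim_def)
  also have "\<dots> = 1 + \<epsilon>\<^sup>2 / real (dim CC) * (\<Sum>e\<in>edges CC. b e * b' e)"
    using assms(1) by (simp add: field_simps)
  finally show ?thesis .
qed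

lemma chi2_P1_P0_eq:
  assumes "cycle_decomp CC \<sigma>" "dim CC > 0"
  shows "chi2 (P1 CC \<sigma> \<epsilon> N) (P0 CC N) (samples CC N) + 1
       = (1 / 2 ^ length \<sigma>)\<^sup>2 * (\<Sum>t\<in>signs (length \<sigma>). \<Sum>t'\<in>signs (length \<sigma>).
           (1 + \<epsilon>\<^sup>2 / real (dim CC) * (\<Sum>e\<in>edges CC. orient \<sigma> t e * orient \<sigma> t' e)) ^ N)"
proof -
  have "finite (Bset \<sigma>)"
    by (simp add: Bset_eq_image_orient signs_def finite_PiE)
  moreover have "p0 CC e \<noteq> 0" for e
    using assms(2) by (simp add: p0_def)
  ultimately have "chi2 (P1 CC \<sigma> \<epsilon> N) (P0 CC N) (samples CC N) + 1
      = (1 / 2 ^ length \<sigma>)\<^sup>2 * (\<Sum>b\<in>Bset \<sigma>. \<Sum>b'\<in>Bset \<sigma>.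
           (\<Sum>e\<in>edges CC. qbe CC b \<epsilon> e * qbe CC b' \<epsilon> e / p0 CC e) ^ N)"
    using chi2_mixture_prodlaw[of "edges CC" "Bset \<sigma>" "p0 CC" "\<lambda>b. qbe CC b \<epsilon>" N]
      cycle_decomp_finite_edges[OF assms(1)]
    by (simp add: P1_def[abs_def] P0_def samples_def card_Bset[OF assms(1)])
  also have "\<dots> = (1 / 2 ^ length \<sigma>)\<^sup>2 * (\<Sum>t\<in>signs (length \<sigma>). \<Sum>t'\<in>signs (length \<sigma>).
           (1 + \<epsilon>\<^sup>2 / real (dim CC) * (\<Sum>e\<in>edges CC. orient \<sigma> t e * orient \<sigma> t' e)) ^ N)"
    by (simp add: Bset_eq_image_orient sum.reindex[OF inj_on_orient[OF assms(1)]]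
        sum_qbe_qbe_div_p0[OF assms(2) sum_orient[OF assms(1)] sum_orient[OF assms(1)]])
  finally show ?thesis .
qed

lemma one_plus_inner_orient_power_le_exp:
  assumes "cycle_decomp CC \<sigma>" "dim CC > 0" "\<epsilon>\<^sup>2 \<le> 1"
    and "t \<in> signs (length \<sigma>)" "t' \<in> signs (length \<sigma>)"
  shows "(1 + \<epsilon>\<^sup>2 / real (dim CC) * (\<Sum>e\<in>edges CC. orient \<sigma> t e * orient \<sigma> t' e)) ^ N
       \<le> exp (\<Sum>i<length \<sigma>. t i * t' i * (real N * \<epsilon>\<^sup>2 / real (dim CC) * real (cyc_len (\<sigma> ! i))))"
proof -
  let ?x = "\<epsilon>\<^sup>2 / real (dim CC) * (\<Sum>e\<in>edges CC. orient \<sigma> t e * orient \<sigma> t' e)"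
  have "\<epsilon>\<^sup>2 / real (dim CC) * (- real (dim CC)) \<le> ?x"
    using inner_orient_ge[OF assms(1,4,5)] by (intro mult_left_mono) auto
  then have "-1 \<le> ?x"
    using assms(2,3) by simp
  then have "(1 + ?x) ^ N \<le> exp (real N * ?x)"
    by (rule one_plus_power_le_exp)
  also have "real N * ?x
      = (\<Sum>i<length \<sigma>. t i * t' i * (real N * \<epsilon>\<^sup>2 / real (dim CC) * real (cyc_len (\<sigma> ! i))))"
    by (simp add: inner_orient[OF assms(1)] sum_distrib_left ac_simps)
  finally show ?thesis .
qed

theorem lemma5p2:
  fixes X :: "'a set" and CC :: "'a set set" and \<sigma> :: "'a cycle list"
    and \<epsilon> :: real and N :: nat
  assumes "finite X"
    and "\<forall>S\<in>CC. S \<subseteq> X \<and> card S \<ge> 2"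
    and "card CC \<ge> card X"
    and "gconnected X CC"
    and "\<forall>S\<in>CC. even (card S)"
    and "\<forall>x\<in>X. even (card {S\<in>CC. x \<in> S})"
    and "cycle_decomp CC \<sigma>"
    and "0 \<le> \<epsilon>" and "\<epsilon> \<le> 1"
    and "N \<ge> 1"
  shows "chi2 (P1 CC \<sigma> \<epsilon> N) (P0 CC N) (samples CC N) + 1
           \<le> exp (real N ^ 2 * \<epsilon> ^ 4 / (2 * real (dim CC)) * alpha CC \<sigma>)"
proof (cases "dim CC = 0")
  case True
  then have "samples CC N = {}"
    using cycle_decomp_finite_edges[OF assms(7)] assms(10)
    by (auto simp: dim_def samples_def PiE_eq_empty_iff intro: exI[of _ 0])
  then show ?thesis
    by (simp add: chi2_def)
next
  case False
  then have pos: "dim CC > 0"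
    by simp
  define w where "w i = real N * \<epsilon>\<^sup>2 / real (dim CC) * real (cyc_len (\<sigma> ! i))" for i
  have "\<epsilon>\<^sup>2 \<le> 1"
    using assms(8,9) by (simp add: power_le_one)
  then have "chi2 (P1 CC \<sigma> \<epsilon> N) (P0 CC N) (samples CC N) + 1
      \<le> (1 / 2 ^ length \<sigma>)\<^sup>2 * (\<Sum>t\<in>signs (length \<sigma>). \<Sum>t'\<in>signs (length \<sigma>).
           exp (\<Sum>i<length \<sigma>. t i * t' i * w i))"
    unfolding chi2_P1_P0_eq[OF assms(7) pos] w_def
    by (intro mult_left_mono sum_mono one_plus_inner_orient_power_le_exp[OF assms(7) pos]) auto
  also have "\<dots> = (\<Prod>i<length \<sigma>. cosh (w i))"
    by (rule mean_exp_signs_correlation)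
  also have "\<dots> \<le> (\<Prod>i<length \<sigma>. exp ((w i)\<^sup>2 / 2))"
    by (intro prod_mono) (simp add: cosh_le_exp_half_square)
  also have "\<dots> = exp (real N ^ 2 * \<epsilon> ^ 4 / (2 * real (dim CC)) * alpha CC \<sigma>)"
    using pos
    by (simp add: exp_sum[symmetric] w_def alpha_def sum_distrib_left sum_divide_distrib
        power_mult_distrib field_simps eval_nat_numeral)
  finally show ?thesis .
qed

end
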